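(* Consider the directed square lattice on $\{1,\dots,n\}^2$ with random nonzero vertex weights $w_u$ and random nonzero edge weights $w_{u,v}$, and let $X_u=\log|w_u|$, $X_e=\log|w_e|$. Suppose there is $t>0$ and $M<\infty$ such that $\mathbb{E}e^{-tX_u},\mathbb{E}e^{tX_u}\le M$ for all vertices $u$ and all $n$, and likewise for edges. Define modified weights by $w'_{u,v}=w_{u,v}\,w_v$ for each edge $(u,v)$ and $w'_u=1$ for each vertex $u$, and let $Z^{(k)\prime}_{S,T}$ be the quantity $Z^{(k)}_{S,T}$ computed with the modified weights. Then for any $k\geq1$, $\delta>0$ and all $S,T$, \[ \mathbb{P}\left(n^{-1/3}\left|\log|Z^{(k)}_{S,T}|-\log|Z^{(k)\prime}_{S,T}|\right|>\delta\right)\to 0 \quad (n\to\infty). \]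
   Context: The directed square lattice has vertex set $\{1,\dots,n\}^2$ and directed edges $(i,j)\to(i+1,j)$, $(i,j)\to(i,j+1)$. A path $\pi=(u_1\to\dots\to u_m)$ (length zero allowed) has weight $\mathrm{wt}(\pi)=\prod_{i=1}^{m-1}w_{u_i,u_{i+1}}\prod_{i=1}^m w_{u_i}$. For sequences $S=(u_1,\dots,u_k)$, $T=(v_1,\dots,v_k)$ of distinct vertices, $Z^{(k)}_{S,T}=\sum_\pi \mathrm{sgn}(\sigma(\pi))\prod_{i=1}^k\mathrm{wt}(\pi_i)$, summed over $k$-tuples of pairwise vertex-disjoint paths with $\pi_i$ from $u_i$ to $v_{\sigma(i)}$ for a permutation $\sigma=\sigma(\pi)$. Edge weights need not be independent, only independent along every path. *)

theory Defs
  imports "HOL-Probability.Probability" "HOL-Combinatorics.Permutations"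
begin

type_synonym vtx = "nat \<times> nat"

definition lattice_vertices :: "nat \<Rightarrow> vtx set" where
  "lattice_vertices n = {1..n} \<times> {1..n}"

definition lattice_edge :: "nat \<Rightarrow> vtx \<Rightarrow> vtx \<Rightarrow> bool" where
  "lattice_edge n u v \<longleftrightarrow> u \<in> lattice_vertices n \<and> v \<in> lattice_vertices n \<and>
     (v = (fst u + 1, snd u) \<or> v = (fst u, snd u + 1))"

definition lattice_path :: "nat \<Rightarrow> vtx list \<Rightarrow> bool" where
  "lattice_path n p \<longleftrightarrow> p \<noteq> [] \<and> set p \<subseteq> lattice_vertices n \<and>
     (\<forall>i. Suc i < length p \<longrightarrow> lattice_edge n (p ! i) (p ! Suc i))"

definition path_wt :: "(vtx \<Rightarrow> real) \<Rightarrow> (vtx \<Rightarrow> vtx \<Rightarrow> real) \<Rightarrow> vtx list \<Rightarrow> real" where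
  "path_wt wv we p = (\<Prod>i<length p - 1. we (p ! i) (p ! Suc i)) * (\<Prod>i<length p. wv (p ! i))"

definition Zk :: "nat \<Rightarrow> (vtx \<Rightarrow> real) \<Rightarrow> (vtx \<Rightarrow> vtx \<Rightarrow> real) \<Rightarrow> vtx list \<Rightarrow> vtx list \<Rightarrow> real" where
  "Zk n wv we S T =
     (\<Sum>\<sigma> \<in> {\<sigma>. \<sigma> permutes {..<length S}}. of_int (sign \<sigma>) *
        (\<Sum>ps \<in> {ps. length ps = length S \<and>
                   (\<forall>i<length S. lattice_path n (ps ! i) \<and> hd (ps ! i) = S ! i \<and>
                                  last (ps ! i) = T ! (\<sigma> i)) \<and>
                   (\<forall>i<length S. \<forall>j<length S. i \<noteq> j \<longrightarrow> set (ps ! i) \<inter> set (ps ! j) = {})}.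
           \<Prod>i<length S. path_wt wv we (ps ! i)))"

end

theory Submission
  imports Defs "HOL-Real_Asymp.Real_Asymp"
begin

(* Every path of a tuple contributing to Z starts at some S_i, and moving the weight of each vertex
   onto the edge entering it leaves only these starting vertices uncovered. Hence
   Z = (prod_i w_{S_i}) Z', so log|Z| - log|Z'| is a sum of k terms log|w_u|. By the Chernoff bound
   each of them exceeds delta n^(1/3) / k in absolute value with probability O(exp(-c n^(1/3))),
   and a union bound over the k terms concludes. *)

lemma path_wt_eq_hd_mult:
  assumes "p \<noteq> []"
  shows "path_wt wv we p = wv (hd p) * path_wt (\<lambda>u. 1) (\<lambda>u v. we u v * wv v) p"
proof -
  obtain m where m: "length p = Suc m" using assms by (cases p) auto
  have "(\<Prod>i<length p. wv (p ! i)) = wv (hd p) * (\<Prod>i<m. wv (p ! Suc i))"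
    using assms unfolding m by (simp only: prod.lessThan_Suc_shift) (simp add: hd_conv_nth)
  then show ?thesis unfolding path_wt_def m by (simp add: prod.distrib mult_ac)
qed

lemma Zk_eq_prod_mult:
  "Zk n wv we S T = (\<Prod>i<length S. wv (S ! i)) * Zk n (\<lambda>u. 1) (\<lambda>u v. we u v * wv v) S T"
proof -
  have tuple_wt: "(\<Prod>i<length S. path_wt wv we (ps ! i)) =
      (\<Prod>i<length S. wv (S ! i)) * (\<Prod>i<length S. path_wt (\<lambda>u. 1) (\<lambda>u v. we u v * wv v) (ps ! i))"
    if "\<forall>i<length S. lattice_path n (ps ! i) \<and> hd (ps ! i) = S ! i" for ps
  proof -
    have "path_wt wv we (ps ! i) = wv (S ! i) * path_wt (\<lambda>u. 1) (\<lambda>u v. we u v * wv v) (ps ! i)"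
      if "i < length S" for i
      using that \<open>\<forall>i<length S. _\<close> path_wt_eq_hd_mult[of "ps ! i" wv we]
      by (simp add: lattice_path_def)
    then show ?thesis by (simp add: prod.distrib)
  qed
  show ?thesis
    unfolding Zk_def sum_distrib_left
    by (intro sum.cong refl) (auto simp: tuple_wt sum_distrib_left mult.left_commute intro!: sum.cong)
qed

lemma abs_ln_abs_mult_diff_le:
  fixes c z :: real
  assumes "c \<noteq> 0"
  shows "\<bar>ln \<bar>c * z\<bar> - ln \<bar>z\<bar>\<bar> \<le> \<bar>ln \<bar>c\<bar>\<bar>"
  using assms by (cases "z = 0") (simp_all add: abs_mult ln_mult)

lemma (in prob_space) measure_ge_le_exp_moment:
  fixes f :: "'a \<Rightarrow> real"
  assumes [measurable]: "f \<in> borel_measurable M" and "t > 0"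
    and moment: "(\<integral>\<^sup>+ x. ennreal (exp (t * f x)) \<partial>M) \<le> ennreal C"
  shows "measure M {x\<in>space M. a \<le> f x} \<le> exp (- t * a) * max C 0"
proof -
  have "emeasure M {x\<in>space M. a \<le> f x} \<le>
          ennreal (exp (- t * a)) * (\<integral>\<^sup>+ x. ennreal (exp (t * f x)) * indicator (space M) x \<partial>M)"
    using \<open>t > 0\<close> by (intro Chernoff_ineq_nn_integral_ge) auto
  also have "(\<integral>\<^sup>+ x. ennreal (exp (t * f x)) * indicator (space M) x \<partial>M) =
             (\<integral>\<^sup>+ x. ennreal (exp (t * f x)) \<partial>M)"
    by (intro nn_integral_cong) simp
  also have "ennreal (exp (- t * a)) * \<dots> \<le> ennreal (exp (- t * a)) * ennreal (max C 0)"
    using moment by (intro mult_left_mono) (auto simp: ennreal_max_0)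
  also have "\<dots> = ennreal (exp (- t * a) * max C 0)"
    by (rule ennreal_mult[symmetric]) auto
  finally show ?thesis
    by (subst (asm) emeasure_eq_measure, subst (asm) ennreal_le_iff) auto
qed

lemma (in prob_space) measure_abs_ln_abs_gt_le:
  fixes X :: "'a \<Rightarrow> real"
  assumes [measurable]: "X \<in> borel_measurable M" and "t > 0"
    and "(\<integral>\<^sup>+ x. ennreal (exp (- t * ln \<bar>X x\<bar>)) \<partial>M) \<le> ennreal C"
    and "(\<integral>\<^sup>+ x. ennreal (exp (t * ln \<bar>X x\<bar>)) \<partial>M) \<le> ennreal C"
  shows "measure M {x\<in>space M. a < \<bar>ln \<bar>X x\<bar>\<bar>} \<le> 2 * exp (- t * a) * max C 0"
proof -
  have "measure M {x\<in>space M. a < \<bar>ln \<bar>X x\<bar>\<bar>} \<le>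
        measure M ({x\<in>space M. a \<le> ln \<bar>X x\<bar>} \<union> {x\<in>space M. a \<le> - ln \<bar>X x\<bar>})"
    by (intro finite_measure_mono) auto
  also have "\<dots> \<le> measure M {x\<in>space M. a \<le> ln \<bar>X x\<bar>} + measure M {x\<in>space M. a \<le> - ln \<bar>X x\<bar>}"
    by (intro measure_Un_le) auto
  also have "\<dots> \<le> exp (- t * a) * max C 0 + exp (- t * a) * max C 0"
    using assms by (intro add_mono measure_ge_le_exp_moment) auto
  finally show ?thesis by (simp add: mult_ac)
qed

lemma (in finite_measure) measure_abs_sum_gt_le:
  fixes f :: "'i \<Rightarrow> 'a \<Rightarrow> real"
  assumes "finite I" and [measurable]: "\<And>i. i \<in> I \<Longrightarrow> f i \<in> borel_measurable M"
  shows "measure M {x\<in>space M. real (card I) * a < \<bar>\<Sum>i\<in>I. f i x\<bar>} \<le>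
         (\<Sum>i\<in>I. measure M {x\<in>space M. a < \<bar>f i x\<bar>})"
proof -
  have "{x\<in>space M. real (card I) * a < \<bar>\<Sum>i\<in>I. f i x\<bar>} \<subseteq> (\<Union>i\<in>I. {x\<in>space M. a < \<bar>f i x\<bar>})"
  proof safe
    fix x assume "x \<in> space M" and gt: "real (card I) * a < \<bar>\<Sum>i\<in>I. f i x\<bar>"
    show "x \<in> (\<Union>i\<in>I. {x\<in>space M. a < \<bar>f i x\<bar>})"
    proof (rule ccontr)
      assume "x \<notin> (\<Union>i\<in>I. {x\<in>space M. a < \<bar>f i x\<bar>})"
      then have "(\<Sum>i\<in>I. \<bar>f i x\<bar>) \<le> (\<Sum>i\<in>I. a)"
        using \<open>x \<in> space M\<close> by (intro sum_mono) auto
      then have "(\<Sum>i\<in>I. \<bar>f i x\<bar>) \<le> real (card I) * a" by simp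
      with gt sum_abs[of "\<lambda>i. f i x" I] show False by linarith
    qed
  qed
  then have "measure M {x\<in>space M. real (card I) * a < \<bar>\<Sum>i\<in>I. f i x\<bar>} \<le>
             measure M (\<Union>i\<in>I. {x\<in>space M. a < \<bar>f i x\<bar>})"
    using \<open>finite I\<close> by (intro finite_measure_mono sets.finite_UN) auto
  also have "\<dots> \<le> (\<Sum>i\<in>I. measure M {x\<in>space M. a < \<bar>f i x\<bar>})"
    using \<open>finite I\<close> by (intro measure_UNION_le) auto
  finally show ?thesis .
qed

lemma abs_ln_abs_Zk_diff_le:
  assumes "\<forall>u\<in>set S. wv u \<noteq> 0"
  shows "\<bar>ln \<bar>Zk n wv we S T\<bar> - ln \<bar>Zk n (\<lambda>u. 1) (\<lambda>u v. we u v * wv v) S T\<bar>\<bar> \<le>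
         \<bar>\<Sum>i<length S. ln \<bar>wv (S ! i)\<bar>\<bar>"
proof -
  define W where "W = (\<Prod>i<length S. wv (S ! i))"
  have nonzero: "\<forall>i<length S. wv (S ! i) \<noteq> 0" using assms by simp
  then have "W \<noteq> 0" by (simp add: W_def)
  moreover have "ln \<bar>W\<bar> = (\<Sum>i<length S. ln \<bar>wv (S ! i)\<bar>)"
    unfolding W_def abs_prod using nonzero by (subst ln_prod) auto
  ultimately show ?thesis
    using abs_ln_abs_mult_diff_le[of W] Zk_eq_prod_mult[of n wv we S T] by (simp add: W_def)
qed

lemma (in prob_space) measure_abs_ln_abs_Zk_diff_gt_le:
  fixes wv :: "vtx \<Rightarrow> 'a \<Rightarrow> real" and we :: "vtx \<Rightarrow> vtx \<Rightarrow> 'a \<Rightarrow> real"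
  assumes [measurable]: "\<And>u. u \<in> set S \<Longrightarrow> wv u \<in> borel_measurable M"
    and nonzero: "\<And>u. u \<in> set S \<Longrightarrow> AE x in M. wv u x \<noteq> 0"
    and "t > 0"
    and moments: "\<And>u. u \<in> set S \<Longrightarrow>
           (\<integral>\<^sup>+ x. ennreal (exp (- t * ln \<bar>wv u x\<bar>)) \<partial>M) \<le> ennreal C \<and>
           (\<integral>\<^sup>+ x. ennreal (exp (t * ln \<bar>wv u x\<bar>)) \<partial>M) \<le> ennreal C"
  shows "measure M {x\<in>space M. real (length S) * a <
           \<bar>ln \<bar>Zk n (\<lambda>u. wv u x) (\<lambda>u v. we u v x) S T\<bar> -
            ln \<bar>Zk n (\<lambda>u. 1) (\<lambda>u v. we u v x * wv v x) S T\<bar>\<bar>} \<le>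
         real (length S) * (2 * exp (- t * a) * max C 0)"
proof -
  define L where "L i x = ln \<bar>wv (S ! i) x\<bar>" for i x
  have [measurable]: "L i \<in> borel_measurable M" if "i < length S" for i
    unfolding L_def using nth_mem[OF that] by measurable
  (* Since ln 0 = 0, the bound of abs_ln_abs_Zk_diff_le fails where some source weight vanishes. *)
  have "AE x in M. \<forall>u\<in>set S. wv u x \<noteq> 0"
    using nonzero by (intro AE_finite_allI) auto
  then have "AE x in M. x \<in> {x\<in>space M. real (length S) * a <
                 \<bar>ln \<bar>Zk n (\<lambda>u. wv u x) (\<lambda>u v. we u v x) S T\<bar> -
                  ln \<bar>Zk n (\<lambda>u. 1) (\<lambda>u v. we u v x * wv v x) S T\<bar>\<bar>} \<longrightarrow>
               x \<in> {x\<in>space M. real (card {..<length S}) * a < \<bar>\<Sum>i<length S. L i x\<bar>}"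
  proof eventually_elim
    case (elim x)
    then show ?case
      using abs_ln_abs_Zk_diff_le[of S "\<lambda>u. wv u x" n "\<lambda>u v. we u v x" T] by (auto simp: L_def)
  qed
  then have "measure M {x\<in>space M. real (length S) * a <
                 \<bar>ln \<bar>Zk n (\<lambda>u. wv u x) (\<lambda>u v. we u v x) S T\<bar> -
                  ln \<bar>Zk n (\<lambda>u. 1) (\<lambda>u v. we u v x * wv v x) S T\<bar>\<bar>} \<le>
             measure M {x\<in>space M. real (card {..<length S}) * a < \<bar>\<Sum>i<length S. L i x\<bar>}"
    by (rule finite_measure_mono_AE) measurable
  also have "\<dots> \<le> (\<Sum>i<length S. measure M {x\<in>space M. a < \<bar>L i x\<bar>})"
    by (rule measure_abs_sum_gt_le) auto
  also have "\<dots> \<le> (\<Sum>i<length S. 2 * exp (- t * a) * max C 0)"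
  proof (rule sum_mono)
    fix i assume "i \<in> {..<length S}"
    then show "measure M {x\<in>space M. a < \<bar>L i x\<bar>} \<le> 2 * exp (- t * a) * max C 0"
      unfolding L_def using moments \<open>t > 0\<close> by (intro measure_abs_ln_abs_gt_le) auto
  qed
  finally show ?thesis by simp
qed

theorem proposition3p2:
  fixes M :: "nat \<Rightarrow> 'a measure"
    and wv :: "nat \<Rightarrow> vtx \<Rightarrow> 'a \<Rightarrow> real"
    and we :: "nat \<Rightarrow> vtx \<Rightarrow> vtx \<Rightarrow> 'a \<Rightarrow> real"
    and t C \<delta> :: real and k :: nat
    and S T :: "nat \<Rightarrow> vtx list"
  assumes P: "\<And>n. prob_space (M n)"
    and Wm: "\<And>n u. u \<in> lattice_vertices n \<Longrightarrow> wv n u \<in> borel_measurable (M n)"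
    and "\<And>n u v. lattice_edge n u v \<Longrightarrow> we n u v \<in> borel_measurable (M n)"
    and Wae: "\<And>n u. u \<in> lattice_vertices n \<Longrightarrow> AE x in M n. wv n u x \<noteq> 0"
    and "\<And>n u v. lattice_edge n u v \<Longrightarrow> AE x in M n. we n u v x \<noteq> 0"
    and t: "t > 0"
    and Wi: "\<And>n u. u \<in> lattice_vertices n \<Longrightarrow>
           (\<integral>\<^sup>+ x. ennreal (exp (- t * ln \<bar>wv n u x\<bar>)) \<partial>M n) \<le> ennreal C \<and>
           (\<integral>\<^sup>+ x. ennreal (exp (t * ln \<bar>wv n u x\<bar>)) \<partial>M n) \<le> ennreal C"
    and "\<And>n u v. lattice_edge n u v \<Longrightarrow>
           (\<integral>\<^sup>+ x. ennreal (exp (- t * ln \<bar>we n u v x\<bar>)) \<partial>M n) \<le> ennreal C \<and>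
           (\<integral>\<^sup>+ x. ennreal (exp (t * ln \<bar>we n u v x\<bar>)) \<partial>M n) \<le> ennreal C"
    and k: "k \<ge> 1" and \<delta>: "\<delta> > 0"
    and ev: "\<forall>\<^sub>F n in sequentially.
           length (S n) = k \<and> length (T n) = k \<and> distinct (S n) \<and> distinct (T n) \<and>
           set (S n) \<subseteq> lattice_vertices n \<and> set (T n) \<subseteq> lattice_vertices n"
  shows "(\<lambda>n. measure (M n) {x \<in> space (M n).
            real n powr (-1/3) *
              \<bar>ln \<bar>Zk n (\<lambda>u. wv n u x) (\<lambda>u v. we n u v x) (S n) (T n)\<bar>
               - ln \<bar>Zk n (\<lambda>u. 1) (\<lambda>u v. we n u v x * wv n v x) (S n) (T n)\<bar>\<bar> > \<delta>})
         \<longlonglongrightarrow> 0"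
proof -
  define a where "a n = \<delta> * real n powr (1/3) / real k" for n :: nat
  define bound where "bound n = real k * (2 * exp (- t * a n) * max C 0)" for n :: nat
  have "bound \<longlonglongrightarrow> 0"
  proof -
    define c where "c = t * \<delta> / real k"
    have "c > 0" using t \<delta> k by (simp add: c_def)
    then have "(\<lambda>n::nat. 2 * real k * max C 0 * exp (- c * real n powr (1/3))) \<longlonglongrightarrow> 0"
      by real_asymp
    then show ?thesis by (simp add: bound_def[abs_def] a_def c_def mult_ac)
  qed
  moreover have "\<forall>\<^sub>F n in sequentially. norm (measure (M n) {x \<in> space (M n).
            real n powr (-1/3) *
              \<bar>ln \<bar>Zk n (\<lambda>u. wv n u x) (\<lambda>u v. we n u v x) (S n) (T n)\<bar>
               - ln \<bar>Zk n (\<lambda>u. 1) (\<lambda>u v. we n u v x * wv n v x) (S n) (T n)\<bar>\<bar> > \<delta>}) \<le> bound n"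
    using ev eventually_gt_at_top[of 0]
  proof eventually_elim
    case (elim n)
    then have len_S: "length (S n) = k" and "n > 0" and S_vertices: "set (S n) \<subseteq> lattice_vertices n"
      by auto
    interpret prob_space "M n" by (rule P)
    have threshold: "\<delta> < real n powr (-1/3) * D \<longleftrightarrow> real (length (S n)) * a n < D" for D
      using \<open>n > 0\<close> len_S k by (simp add: a_def powr_minus field_simps)
    have bound_eq: "bound n = real (length (S n)) * (2 * exp (- t * a n) * max C 0)"
      by (simp add: bound_def len_S)
    show ?case
      unfolding threshold bound_eq real_norm_def abs_of_nonneg[OF measure_nonneg]
      using Wm Wae Wi S_vertices t by (intro measure_abs_ln_abs_Zk_diff_gt_le) auto
  qed
  ultimately show ?thesis by (rule Lim_null_comparison[rotated])
qed

end
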